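(* For every $d\ge2$ there exist constants $a_d,A_d>0$ and an integer $T'_d\ge1$, depending only on $d$, such that for every $\delta>0$ and every $T\ge T'_d$, \[ \delta\bigl(1+a_d\,T^{-2/(d-1)}\bigr)\;\le\;\mathrm{OPT}^{\mathrm{improper}}_d(T,\delta)\;\le\;\delta\bigl(1+A_d\,T^{-2/(d-1)}\bigr). \]
   Context: Improper linear reconstruction game: fix $d\ge1$, $T\ge0$, $\delta>0$. An adversary holds a secret $x^*\in\mathbb{R}^d$; in each round $t=1,\dots,T$ the reconstructor (possibly adaptively) chooses $v_t\in S^{d-1}$ and receives $r_t\in\mathbb{R}$ with $|r_t-\langle x^*,v_t\rangle|\le\delta$. After $T$ rounds the reconstructor outputs a function $\hat G_T:S^{d-1}\to\mathbb{R}$. All strategies are deterministic. $\mathrm{OPT}^{\mathrm{improper}}_d(T,\delta)=\inf_{\mathcal R}\sup_{x^*}\sup_{\mathcal A}\sup_{v\in S^{d-1}}|\hat G_T(v)-\langle x^*,v\rangle|$, the infimum over improper reconstructor strategies and the suprema over secrets and adversary answer strategies consistent with the secret. *)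

theory Defs
  imports "HOL-Analysis.Analysis"
begin

text \<open>A deterministic (adaptive) reconstructor is a pair (Q, G): Q maps the list of
answers received so far to the next query; G maps the full list of T answers to the
output function.  A deterministic adversary maps the list of queries asked so far
(including the current one) to its answer.\<close>

fun play_answers :: "(real list \<Rightarrow> 'v) \<Rightarrow> ('v list \<Rightarrow> real) \<Rightarrow> nat \<Rightarrow> real list" where
  "play_answers Q adv 0 = []"
| "play_answers Q adv (Suc t) =
     (let rs = play_answers Q adv t
      in rs @ [adv (map (\<lambda>k. Q (take k rs)) [0..<Suc t])])"

definition valid_reconstructor :: "(real list \<Rightarrow> real ^ 'n) \<Rightarrow> bool" where
  "valid_reconstructor Q \<longleftrightarrow> (\<forall>rs. Q rs \<in> sphere 0 1)"

definition consistent_adversary ::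
  "(real list \<Rightarrow> real ^ 'n) \<Rightarrow> ((real ^ 'n) list \<Rightarrow> real) \<Rightarrow> nat \<Rightarrow> real \<Rightarrow> real ^ 'n \<Rightarrow> bool" where
  "consistent_adversary Q adv T \<delta> x \<longleftrightarrow>
     (let rs = play_answers Q adv T in
      \<forall>k<T. \<bar>rs ! k - x \<bullet> Q (take k rs)\<bar> \<le> \<delta>)"

definition OPT_improper :: "'n::finite itself \<Rightarrow> nat \<Rightarrow> real \<Rightarrow> ereal" where
  "OPT_improper _ T \<delta> =
     (INF QG \<in> {(Q :: real list \<Rightarrow> real ^ 'n, G :: real list \<Rightarrow> real ^ 'n \<Rightarrow> real).
                   valid_reconstructor Q}.
        (SUP xav \<in> {(x, adv, v). consistent_adversary (fst QG) adv T \<delta> x \<and> v \<in> sphere 0 1}.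
           (case xav of (x, adv, v) \<Rightarrow>
              ereal \<bar>snd QG (play_answers (fst QG) adv T) v - x \<bullet> v\<bar>)))"

end

theory Submission
  imports Defs
begin

(* Upper bound: if every unit vector v has some w in a set W of at most T unit vectors with
   v \<bullet> w \<ge> c, then c v lies in the convex hull of W, so v = \<Sum> \<mu>\<^sub>w w with \<mu> \<ge> 0 and
   \<Sum> \<mu>\<^sub>w = 1/c.  Querying W and answering at v with \<Sum> \<mu>\<^sub>w r\<^sub>w errs by at most \<delta>/c.
   Lower bound: let S be more than T unit vectors such that no unit u satisfies
   |w \<bullet> u| > 1 - \<gamma> for two of them.  Against the adversary that always answers 0, some w in S
   has |w \<bullet> u\<^sub>t| \<le> 1 - \<gamma> for every query u\<^sub>t, so both secrets \<plusminus>\<delta>/(1-\<gamma>) w are consistent and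
   the output at w misses one of them by \<delta>/(1-\<gamma>).
   Both sets come from grids of mesh 2/m on faces of the cube [-1,1]^d, projected to the sphere:
   all faces give a net with 1 - c = O(1/m^2), one face gives a packing with \<gamma> = \<Omega>(1/m^2),
   and m^(d-1) is of order T, so 1/m^2 is of order T^(-2/(d-1)). *)

section \<open>Bounds from nets and packings\<close>

lemma length_play_answers [simp]: "length (play_answers Q adv t) = t"
  by (induction t) (auto simp: Let_def)

lemma play_answers_silent: "play_answers Q (\<lambda>_. 0) t = replicate t 0"
  by (induction t) (auto simp: Let_def replicate_append_same)

lemma consistent_silent_adversary_iff:
  "consistent_adversary Q (\<lambda>_. 0) T \<delta> x \<longleftrightarrow> (\<forall>t<T. \<bar>x \<bullet> Q (replicate t 0)\<bar> \<le> \<delta>)"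
  by (simp add: consistent_adversary_def play_answers_silent min_def)

lemma OPT_improper_leI:
  fixes Q :: "real list \<Rightarrow> real ^ 'n::finite" and G :: "real list \<Rightarrow> real ^ 'n \<Rightarrow> real"
  assumes "valid_reconstructor Q"
    and "\<And>x adv v. consistent_adversary Q adv T \<delta> x \<Longrightarrow> norm v = 1 \<Longrightarrow>
           \<bar>G (play_answers Q adv T) v - x \<bullet> v\<bar> \<le> B"
  shows "OPT_improper TYPE('n) T \<delta> \<le> ereal B"
  unfolding OPT_improper_def
  by (rule INF_lower2[of "(Q, G)"]) (use assms in \<open>auto intro!: SUP_least\<close>)

lemma OPT_improper_geI:
  assumes "\<And>(Q :: real list \<Rightarrow> real ^ 'n::finite) (G :: real list \<Rightarrow> real ^ 'n \<Rightarrow> real).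
             valid_reconstructor Q \<Longrightarrow>
             \<exists>x adv v. consistent_adversary Q adv T \<delta> x \<and> norm v = 1 \<and>
               B \<le> \<bar>G (play_answers Q adv T) v - x \<bullet> v\<bar>"
  shows "ereal B \<le> OPT_improper TYPE('n) T \<delta>"
  unfolding OPT_improper_def
proof (rule INF_greatest, clarify)
  fix Q :: "real list \<Rightarrow> real ^ 'n" and G :: "real list \<Rightarrow> real ^ 'n \<Rightarrow> real"
  assume "valid_reconstructor Q"
  then obtain x adv v where "consistent_adversary Q adv T \<delta> x" "norm v = 1"
      and "B \<le> \<bar>G (play_answers Q adv T) v - x \<bullet> v\<bar>"
    using assms by blast
  then show "ereal B \<le> (SUP xav \<in> {(x, adv, v). consistent_adversary (fst (Q, G)) adv T \<delta> x \<and>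
        v \<in> sphere 0 1}.
      case xav of (x, adv, v) \<Rightarrow> ereal \<bar>snd (Q, G) (play_answers (fst (Q, G)) adv T) v - x \<bullet> v\<bar>)"
    by (intro SUP_upper2[of "(x, adv, v)"]) auto
qed

lemma scaleR_in_convex_hull_of_net:
  fixes W :: "'a::euclidean_space set"
  assumes "finite W" and "0 < c" and net: "\<And>u. norm u = 1 \<Longrightarrow> \<exists>w\<in>W. c \<le> u \<bullet> w"
    and "norm v = 1"
  shows "c *\<^sub>R v \<in> convex hull W"
proof (rule ccontr)
  assume "c *\<^sub>R v \<notin> convex hull W"
  moreover have "closed (convex hull W)"
    by (simp add: \<open>finite W\<close> compact_imp_closed finite_imp_compact_convex_hull)
  ultimately obtain a b where ab: "a \<bullet> (c *\<^sub>R v) < b" "\<forall>x\<in>convex hull W. b < a \<bullet> x"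
    using separating_hyperplane_closed_point[OF convex_convex_hull] by blast
  obtain w0 where "w0 \<in> W" using net[OF \<open>norm v = 1\<close>] by blast
  have "a \<noteq> 0"
    using ab \<open>w0 \<in> W\<close> hull_subset[of W convex] by force
  define u where "u = - sgn a"
  have "norm u = 1" using \<open>a \<noteq> 0\<close> by (simp add: u_def norm_sgn)
  then obtain w where "w \<in> W" "c \<le> u \<bullet> w" using net by blast
  have "a \<bullet> (c *\<^sub>R v) < a \<bullet> w" using ab \<open>w \<in> W\<close> hull_subset[of W convex] by force
  then have "u \<bullet> w < u \<bullet> (c *\<^sub>R v)"
    using \<open>a \<noteq> 0\<close> by (simp add: u_def sgn_div_norm divide_simps)
  also have "\<dots> \<le> norm u * norm (c *\<^sub>R v)" by (rule norm_cauchy_schwarz)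
  also have "\<dots> = c" using \<open>norm u = 1\<close> \<open>norm v = 1\<close> \<open>0 < c\<close> by simp
  finally show False using \<open>c \<le> u \<bullet> w\<close> by simp
qed

lemma ex_net_weights:
  fixes W :: "'a::euclidean_space set"
  assumes "finite W" and "0 < c" and net: "\<And>u. norm u = 1 \<Longrightarrow> \<exists>w\<in>W. c \<le> u \<bullet> w"
  obtains \<mu> where "\<And>v w. norm v = 1 \<Longrightarrow> w \<in> W \<Longrightarrow> 0 \<le> \<mu> v w"
    "\<And>v. norm v = 1 \<Longrightarrow> sum (\<mu> v) W = 1 / c" "\<And>v. norm v = 1 \<Longrightarrow> (\<Sum>w\<in>W. \<mu> v w *\<^sub>R w) = v"
proof -
  have "\<forall>v. \<exists>a. norm v = 1 \<longrightarrow>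
          (\<forall>w\<in>W. 0 \<le> a w) \<and> sum a W = 1 \<and> (\<Sum>w\<in>W. a w *\<^sub>R w) = c *\<^sub>R v"
    using scaleR_in_convex_hull_of_net[OF assms] by (auto simp: convex_hull_finite[OF \<open>finite W\<close>])
  then obtain a where a: "\<And>v. norm v = 1 \<Longrightarrow>
      (\<forall>w\<in>W. 0 \<le> a v w) \<and> sum (a v) W = 1 \<and> (\<Sum>w\<in>W. a v w *\<^sub>R w) = c *\<^sub>R v"
    by metis
  show ?thesis
  proof (rule that[of "\<lambda>v w. a v w / c"])
    fix v :: 'a assume "norm v = 1"
    note av = a[OF this]
    show "0 \<le> a v w / c" if "w \<in> W" for w using av that \<open>0 < c\<close> by simp
    show "(\<Sum>w\<in>W. a v w / c) = 1 / c" using av by (simp flip: sum_divide_distrib)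
    have "(\<Sum>w\<in>W. (a v w / c) *\<^sub>R w) = (1 / c) *\<^sub>R (\<Sum>w\<in>W. a v w *\<^sub>R w)"
      by (simp add: scaleR_sum_right)
    then show "(\<Sum>w\<in>W. (a v w / c) *\<^sub>R w) = v" using av \<open>0 < c\<close> by simp
  qed
qed

lemma OPT_improper_le_of_net:
  fixes W :: "(real ^ 'n::finite) set"
  assumes "finite W" "W \<subseteq> sphere 0 1" "card W \<le> T" "0 < c"
    and net: "\<And>u. norm u = 1 \<Longrightarrow> \<exists>w\<in>W. c \<le> u \<bullet> w"
  shows "OPT_improper TYPE('n) T \<delta> \<le> ereal (\<delta> / c)"
proof -
  obtain \<mu> where \<mu>: "\<And>v w. norm v = 1 \<Longrightarrow> w \<in> W \<Longrightarrow> 0 \<le> \<mu> v w"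
      "\<And>v. norm v = 1 \<Longrightarrow> sum (\<mu> v) W = 1 / c" "\<And>v. norm v = 1 \<Longrightarrow> (\<Sum>w\<in>W. \<mu> v w *\<^sub>R w) = v"
    using ex_net_weights[OF \<open>finite W\<close> \<open>0 < c\<close> net] by blast
  obtain w0 where "w0 \<in> W" using net[of "axis undefined 1"] by auto
  obtain idx where idx: "bij_betw idx W {0..<card W}"
    using ex_bij_betw_finite_nat[OF \<open>finite W\<close>] by blast
  define Q where "Q rs = (if length rs < card W then inv_into W idx (length rs) else w0)"
    for rs :: "real list"
  define G where "G rs v = (\<Sum>w\<in>W. \<mu> v w * rs ! idx w)"
    for rs :: "real list" and v :: "real ^ 'n"
  have "Q rs \<in> W" for rs
    using idx \<open>w0 \<in> W\<close> by (auto simp: Q_def bij_betw_def intro: inv_into_into)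
  then have "valid_reconstructor Q"
    using \<open>W \<subseteq> sphere 0 1\<close> by (auto simp: valid_reconstructor_def subset_iff)
  then show ?thesis
  proof (rule OPT_improper_leI[where G = G])
    fix x adv and v :: "real ^ 'n"
    assume cons: "consistent_adversary Q adv T \<delta> x" and "norm v = 1"
    define rs where "rs = play_answers Q adv T"
    have answer: "\<bar>rs ! idx w - x \<bullet> w\<bar> \<le> \<delta>" if "w \<in> W" for w
    proof -
      have "idx w < card W" using idx that by (auto simp: bij_betw_def)
      then have "Q (take (idx w) rs) = w"
        using idx that \<open>card W \<le> T\<close> by (simp add: Q_def rs_def bij_betw_def)
      then show ?thesis
        using cons \<open>idx w < card W\<close> \<open>card W \<le> T\<close>
        unfolding consistent_adversary_def rs_def Let_def by (metis order_less_le_trans)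
    qed
    have "x \<bullet> v = x \<bullet> (\<Sum>w\<in>W. \<mu> v w *\<^sub>R w)" using \<mu>(3)[OF \<open>norm v = 1\<close>] by simp
    also have "\<dots> = (\<Sum>w\<in>W. \<mu> v w * (x \<bullet> w))" by (simp add: inner_sum_right)
    finally have "x \<bullet> v = (\<Sum>w\<in>W. \<mu> v w * (x \<bullet> w))" .
    then have "\<bar>G rs v - x \<bullet> v\<bar> = \<bar>\<Sum>w\<in>W. \<mu> v w * (rs ! idx w - x \<bullet> w)\<bar>"
      by (simp add: G_def sum_subtractf right_diff_distrib)
    also have "\<dots> \<le> (\<Sum>w\<in>W. \<mu> v w * \<delta>)"
      using \<mu>(1)[OF \<open>norm v = 1\<close>] answer
      by (intro order_trans[OF sum_abs] sum_mono) (simp add: abs_mult mult_left_mono)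
    also have "\<dots> = \<delta> / c" using \<mu>(2)[OF \<open>norm v = 1\<close>] by (simp flip: sum_distrib_right)
    finally show "\<bar>G (play_answers Q adv T) v - x \<bullet> v\<bar> \<le> \<delta> / c" by (simp add: rs_def)
  qed
qed

lemma ex_unaligned_with_queries:
  fixes S :: "'a::real_inner set" and u :: "nat \<Rightarrow> 'a"
  assumes "finite S" "T < card S"
    and unique: "\<And>t w w'. w \<in> S \<Longrightarrow> w' \<in> S \<Longrightarrow>
                   \<gamma> < \<bar>w \<bullet> u t\<bar> \<Longrightarrow> \<gamma> < \<bar>w' \<bullet> u t\<bar> \<Longrightarrow> w = w'"
  shows "\<exists>w\<in>S. \<forall>t<T. \<bar>w \<bullet> u t\<bar> \<le> \<gamma>"
proof (rule ccontr)
  define B where "B t = {w\<in>S. \<gamma> < \<bar>w \<bullet> u t\<bar>}" for t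
  assume "\<not> ?thesis"
  then have "S \<subseteq> (\<Union>t<T. B t)" by (force simp: B_def)
  moreover have "card (B t) \<le> 1" for t
    using unique \<open>finite S\<close> by (auto simp: B_def card_le_Suc0_iff_eq)
  then have "card (\<Union>t<T. B t) \<le> T"
    using card_UN_le[of "{..<T}" B] sum_mono[of "{..<T}" "\<lambda>t. card (B t)" "\<lambda>_. 1"] by simp
  moreover have "finite (\<Union>t<T. B t)" using \<open>finite S\<close> by (simp add: B_def)
  ultimately show False
    using \<open>T < card S\<close> card_mono[of "\<Union>t<T. B t" S] by linarith
qed

lemma consistent_silent_adversary_scaleR:
  assumes "\<forall>t<T. \<bar>w \<bullet> Q (replicate t 0)\<bar> \<le> 1 - \<gamma>" "\<gamma> < 1" "0 \<le> \<delta>" "\<bar>s\<bar> = 1"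
  shows "consistent_adversary Q (\<lambda>_. 0) T \<delta> ((s * \<delta> / (1 - \<gamma>)) *\<^sub>R w)"
proof -
  define R where "R = \<delta> / (1 - \<gamma>)"
  have "0 \<le> R" using assms(2,3) by (simp add: R_def)
  have "\<bar>((s * R) *\<^sub>R w) \<bullet> Q (replicate t 0)\<bar> \<le> \<delta>" if "t < T" for t
  proof -
    have "\<bar>((s * R) *\<^sub>R w) \<bullet> Q (replicate t 0)\<bar> = R * \<bar>w \<bullet> Q (replicate t 0)\<bar>"
      using \<open>\<bar>s\<bar> = 1\<close> \<open>0 \<le> R\<close> by (simp add: abs_mult)
    also have "\<dots> \<le> R * (1 - \<gamma>)" using assms(1) that \<open>0 \<le> R\<close> by (simp add: mult_left_mono)
    finally show ?thesis using \<open>\<gamma> < 1\<close> by (simp add: R_def)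
  qed
  then show ?thesis by (simp add: consistent_silent_adversary_iff R_def)
qed

lemma OPT_improper_ge_of_packing:
  fixes S :: "(real ^ 'n::finite) set"
  assumes "finite S" "S \<subseteq> sphere 0 1" "T < card S" "\<gamma> < 1" "0 \<le> \<delta>"
    and unique: "\<And>u w w'. norm u = 1 \<Longrightarrow> w \<in> S \<Longrightarrow> w' \<in> S \<Longrightarrow>
                   1 - \<gamma> < \<bar>w \<bullet> u\<bar> \<Longrightarrow> 1 - \<gamma> < \<bar>w' \<bullet> u\<bar> \<Longrightarrow> w = w'"
  shows "ereal (\<delta> / (1 - \<gamma>)) \<le> OPT_improper TYPE('n) T \<delta>"
proof (rule OPT_improper_geI)
  fix Q :: "real list \<Rightarrow> real ^ 'n" and G :: "real list \<Rightarrow> real ^ 'n \<Rightarrow> real"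
  assume "valid_reconstructor Q"
  define R where "R = \<delta> / (1 - \<gamma>)"
  have "0 \<le> R" using assms by (simp add: R_def)
  have "norm (Q rs) = 1" for rs
    using \<open>valid_reconstructor Q\<close> by (simp add: valid_reconstructor_def)
  then obtain w where "w \<in> S" and w: "\<forall>t<T. \<bar>w \<bullet> Q (replicate t 0)\<bar> \<le> 1 - \<gamma>"
    using ex_unaligned_with_queries[OF \<open>finite S\<close> \<open>T < card S\<close>, of "1 - \<gamma>" "\<lambda>t. Q (replicate t 0)"]
      unique by blast
  have "norm w = 1" using \<open>w \<in> S\<close> \<open>S \<subseteq> sphere 0 1\<close> by auto
  define g where "g = G (replicate T 0) w"
  obtain s :: real where "\<bar>s\<bar> = 1" "R \<le> \<bar>g - s * R\<bar>"
  proof (cases "0 \<le> g")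
    case True then show ?thesis using that[of "-1"] \<open>0 \<le> R\<close> by simp
  next
    case False then show ?thesis using that[of 1] \<open>0 \<le> R\<close> by simp
  qed
  moreover have "w \<bullet> w = 1" using \<open>norm w = 1\<close> by (simp add: dot_square_norm)
  ultimately have "R \<le> \<bar>G (play_answers Q (\<lambda>_. 0) T) w - ((s * R) *\<^sub>R w) \<bullet> w\<bar>"
    by (simp add: play_answers_silent g_def)
  moreover have "consistent_adversary Q (\<lambda>_. 0) T \<delta> ((s * R) *\<^sub>R w)"
    using consistent_silent_adversary_scaleR[OF w \<open>\<gamma> < 1\<close> \<open>0 \<le> \<delta>\<close> \<open>\<bar>s\<bar> = 1\<close>]
    by (simp add: R_def)
  ultimately show "\<exists>x adv v. consistent_adversary Q adv T \<delta> x \<and> norm v = 1 \<and>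
      \<delta> / (1 - \<gamma>) \<le> \<bar>G (play_answers Q adv T) v - x \<bullet> v\<bar>"
    using \<open>norm w = 1\<close> unfolding R_def by blast
qed

section \<open>Projected grids on the faces of the cube\<close>

lemma norm_sgn_diff_le:
  fixes p q :: "'a::real_normed_vector"
  assumes "p \<noteq> 0" "q \<noteq> 0"
  shows "norm (sgn p - sgn q) \<le> 2 * norm (p - q) / norm p"
proof -
  have "sgn p - sgn q = (1 / norm p) *\<^sub>R (p - q) + (1 / norm p - 1 / norm q) *\<^sub>R q"
    by (simp add: sgn_div_norm divide_inverse_commute algebra_simps)
  then have "norm (sgn p - sgn q)
      \<le> norm ((1 / norm p) *\<^sub>R (p - q)) + norm ((1 / norm p - 1 / norm q) *\<^sub>R q)"
    by (metis norm_triangle_ineq)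
  also have "norm ((1 / norm p) *\<^sub>R (p - q)) = norm (p - q) / norm p" by simp
  also have "norm ((1 / norm p - 1 / norm q) *\<^sub>R q) = \<bar>norm q - norm p\<bar> / norm p"
    using assms by (simp add: field_simps)
  also have "\<bar>norm q - norm p\<bar> \<le> norm (p - q)"
    by (metis norm_minus_commute norm_triangle_ineq3)
  finally show ?thesis by (simp add: divide_right_mono)
qed

lemma norm_diff_le_sgn_diff:
  fixes p q :: "real ^ 'n::finite"
  assumes "p $ i = 1" "q $ i = 1" "norm p \<le> D" "norm q \<le> D"
  shows "norm (p - q) \<le> (D + D\<^sup>2) * norm (sgn p - sgn q)"
proof -
  have "1 \<le> norm p" "1 \<le> norm q"
    using component_le_norm_cart[of p i] component_le_norm_cart[of q i] assms(1,2) by simp_all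
  then have "p \<noteq> 0" "q \<noteq> 0" by auto
  define a b where "a = sgn p" and "b = sgn q"
  have "p = norm p *\<^sub>R a" "q = norm q *\<^sub>R b" "norm b = 1"
    using \<open>p \<noteq> 0\<close> \<open>q \<noteq> 0\<close> by (simp_all add: a_def b_def sgn_div_norm norm_sgn)
  have "a $ i = 1 / norm p" "b $ i = 1 / norm q"
    using assms(1,2) by (simp_all add: a_def b_def sgn_div_norm divide_inverse_commute)
  have "norm p - norm q = norm p * norm q * (b $ i - a $ i)"
    unfolding \<open>a $ i = _\<close> \<open>b $ i = _\<close> using \<open>p \<noteq> 0\<close> \<open>q \<noteq> 0\<close> by (simp add: field_simps)
  then have "\<bar>norm p - norm q\<bar> = norm p * norm q * \<bar>b $ i - a $ i\<bar>" by (simp add: abs_mult)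
  also have "\<dots> \<le> D * D * norm (a - b)"
    using component_le_norm_cart[of "a - b" i] assms(3,4) \<open>1 \<le> norm p\<close> \<open>1 \<le> norm q\<close>
    by (intro mult_mono) (auto simp: abs_minus_commute)
  finally have "\<bar>norm p - norm q\<bar> \<le> D * D * norm (a - b)" .
  have "p - q = norm p *\<^sub>R (a - b) + (norm p - norm q) *\<^sub>R b"
    using \<open>p = _\<close> \<open>q = _\<close> by (simp add: algebra_simps)
  then have "norm (p - q) \<le> norm p * norm (a - b) + \<bar>norm p - norm q\<bar>"
    using norm_triangle_ineq[of "norm p *\<^sub>R (a - b)" "(norm p - norm q) *\<^sub>R b"] \<open>norm b = 1\<close>
    by simp
  also have "\<dots> \<le> D * norm (a - b) + D * D * norm (a - b)"
    using assms(3) \<open>\<bar>norm p - norm q\<bar> \<le> _\<close> by (intro add_mono mult_right_mono) auto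
  finally show ?thesis by (simp add: a_def b_def algebra_simps power2_eq_square)
qed

lemma norm_sgn_add_ge:
  fixes p q :: "real ^ 'n::finite"
  assumes "p $ i = 1" "q $ i = 1" "norm p \<le> D" "norm q \<le> D"
  shows "2 / D \<le> norm (sgn p + sgn q)"
proof -
  have "1 \<le> norm p" "1 \<le> norm q"
    using component_le_norm_cart[of p i] component_le_norm_cart[of q i] assms(1,2) by simp_all
  then have "1 / D \<le> 1 / norm p" "1 / D \<le> 1 / norm q"
    using assms(3,4) by (auto intro!: frac_le)
  then have "2 / D \<le> (sgn p + sgn q) $ i"
    using assms(1,2) by (simp add: sgn_div_norm divide_inverse_commute)
  also have "\<dots> \<le> norm (sgn p + sgn q)"
    using component_le_norm_cart by (rule order_trans[OF abs_ge_self])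
  finally show ?thesis .
qed

lemma sign_close_of_aligned:
  fixes w u :: "'a::real_inner"
  assumes "norm w = 1" "norm u = 1" "0 < s" "1 - s\<^sup>2 / 8 < \<bar>w \<bullet> u\<bar>"
  obtains \<sigma> :: real where "\<bar>\<sigma>\<bar> = 1" "norm (w - \<sigma> *\<^sub>R u) < s / 2"
proof -
  define \<sigma> :: real where "\<sigma> = (if 0 \<le> w \<bullet> u then 1 else -1)"
  have "\<bar>\<sigma>\<bar> = 1" "\<sigma> * (w \<bullet> u) = \<bar>w \<bullet> u\<bar>" by (auto simp: \<sigma>_def)
  have "(norm (w - \<sigma> *\<^sub>R u))\<^sup>2 = 2 - 2 * \<bar>w \<bullet> u\<bar>"
    using dot_norm_neg[of w "\<sigma> *\<^sub>R u"] \<open>\<bar>\<sigma>\<bar> = 1\<close> \<open>\<sigma> * (w \<bullet> u) = _\<close> assms(1,2) by simp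
  also have "\<dots> < (s / 2)\<^sup>2" using assms(4) by (simp add: power_divide)
  finally have "norm (w - \<sigma> *\<^sub>R u) < s / 2"
    using \<open>0 < s\<close>
    by (meson power_less_imp_less_base divide_nonneg_nonneg less_imp_le zero_le_numeral)
  with \<open>\<bar>\<sigma>\<bar> = 1\<close> show ?thesis by (rule that)
qed

lemma norm_diff_or_add_lt_of_aligned:
  fixes w w' u :: "'a::real_inner"
  assumes "norm w = 1" "norm w' = 1" "norm u = 1" "0 < s"
    and "1 - s\<^sup>2 / 8 < \<bar>w \<bullet> u\<bar>" "1 - s\<^sup>2 / 8 < \<bar>w' \<bullet> u\<bar>"
  shows "norm (w - w') < s \<or> norm (w + w') < s"
proof -
  obtain \<sigma> :: real where "\<bar>\<sigma>\<bar> = 1" "norm (w - \<sigma> *\<^sub>R u) < s / 2"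
    using sign_close_of_aligned[OF assms(1,3,4,5)] .
  obtain \<sigma>' :: real where "\<bar>\<sigma>'\<bar> = 1" "norm (w' - \<sigma>' *\<^sub>R u) < s / 2"
    using sign_close_of_aligned[OF assms(2,3,4,6)] .
  have "norm (\<sigma>' *\<^sub>R w - \<sigma> *\<^sub>R w') = norm (\<sigma>' *\<^sub>R (w - \<sigma> *\<^sub>R u) - \<sigma> *\<^sub>R (w' - \<sigma>' *\<^sub>R u))"
    by (simp add: algebra_simps)
  also have "\<dots> \<le> norm (w - \<sigma> *\<^sub>R u) + norm (w' - \<sigma>' *\<^sub>R u)"
    using norm_triangle_ineq4 \<open>\<bar>\<sigma>\<bar> = 1\<close> \<open>\<bar>\<sigma>'\<bar> = 1\<close> by (metis mult_1 norm_scaleR)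
  finally have "norm (\<sigma>' *\<^sub>R w - \<sigma> *\<^sub>R w') < s"
    using \<open>norm (w - \<sigma> *\<^sub>R u) < s / 2\<close> \<open>norm (w' - \<sigma>' *\<^sub>R u) < s / 2\<close> by linarith
  moreover have "\<sigma> = 1 \<or> \<sigma> = -1" "\<sigma>' = 1 \<or> \<sigma>' = -1"
    using \<open>\<bar>\<sigma>\<bar> = 1\<close> \<open>\<bar>\<sigma>'\<bar> = 1\<close> by auto
  moreover have "norm (- w - w') = norm (w + w')"
    by (metis minus_add_distrib diff_conv_add_uminus norm_minus_cancel)
  ultimately show ?thesis by (auto simp: norm_minus_commute)
qed

definition face_index :: "'n::finite \<Rightarrow> nat \<Rightarrow> ('n \<Rightarrow> nat) set" where
  "face_index i m = (\<Pi>\<^sub>E j\<in>UNIV. if j = i then {0} else {..m})"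

definition face_point :: "'n::finite \<Rightarrow> real \<Rightarrow> nat \<Rightarrow> ('n \<Rightarrow> nat) \<Rightarrow> real ^ 'n" where
  "face_point i \<sigma> m k = (\<chi> j. if j = i then \<sigma> else -1 + 2 * real (k j) / real m)"

lemma face_index_iff: "k \<in> face_index i m \<longleftrightarrow> k i = 0 \<and> (\<forall>j. k j \<le> m)"
proof -
  have "k \<in> face_index i m \<longleftrightarrow> (\<forall>j. k j \<in> (if j = i then {0} else {..m}))"
    by (simp add: face_index_def PiE_UNIV_domain Pi_iff)
  also have "\<dots> \<longleftrightarrow> k i = 0 \<and> (\<forall>j. k j \<le> m)"
    by (metis atMost_iff le0 singletonD singletonI)
  finally show ?thesis .
qed

lemma finite_face_index: "finite (face_index i m)"
  by (simp add: face_index_def finite_PiE)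

lemma card_face_index: "card (face_index (i::'n::finite) m) = (m + 1) ^ (CARD('n) - 1)"
proof -
  have "card (face_index i m) = (\<Prod>j\<in>UNIV. if j = i then 1 else m + 1)"
    by (simp add: face_index_def card_PiE if_distrib cong: if_cong)
  also have "\<dots> = (\<Prod>j\<in>UNIV - {i}. m + 1)"
    by (simp add: prod.If_cases Diff_eq Int_commute)
  finally show ?thesis by (simp add: card_Diff_singleton)
qed

lemma norm_face_point_le:
  fixes i :: "'n::finite"
  assumes "\<bar>\<sigma>\<bar> \<le> 1" "k \<in> face_index i m"
  shows "norm (face_point i \<sigma> m k) \<le> CARD('n)"
proof -
  have "\<bar>face_point i \<sigma> m k $ j\<bar> \<le> 1" for j
  proof (cases "j = i \<or> m = 0")
    case False
    then have "0 \<le> 2 * real (k j) / real m" "2 * real (k j) / real m \<le> 2"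
      using assms(2) by (auto simp: face_index_iff divide_le_eq)
    moreover have "face_point i \<sigma> m k $ j = -1 + 2 * real (k j) / real m"
      using False by (simp add: face_point_def)
    ultimately show ?thesis unfolding abs_le_iff by linarith
  qed (use assms(1) in \<open>auto simp: face_point_def\<close>)
  then have "(\<Sum>j\<in>UNIV. \<bar>face_point i \<sigma> m k $ j\<bar>) \<le> CARD('n)"
    using sum_bounded_above[of UNIV "\<lambda>j. \<bar>face_point i \<sigma> m k $ j\<bar>" 1] by simp
  then show ?thesis by (rule order_trans[OF norm_le_l1_cart])
qed

lemma one_le_norm_face_point: "\<bar>\<sigma>\<bar> = 1 \<Longrightarrow> 1 \<le> norm (face_point i \<sigma> m k)"
  using component_le_norm_cart[of "face_point i \<sigma> m k" i] by (simp add: face_point_def)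

lemma face_point_dist_ge:
  assumes "0 < m" "k \<in> face_index i m" "k' \<in> face_index i m" "k \<noteq> k'"
  shows "2 / real m \<le> norm (face_point i \<sigma> m k - face_point i \<sigma> m k')"
proof -
  obtain j where "k j \<noteq> k' j" using \<open>k \<noteq> k'\<close> by (meson ext)
  then have "j \<noteq> i" using assms(2,3) by (auto simp: face_index_iff)
  have "1 \<le> \<bar>real (k j) - real (k' j)\<bar>" using \<open>k j \<noteq> k' j\<close> by linarith
  then have "2 / real m \<le> \<bar>2 * (real (k j) - real (k' j)) / real m\<bar>"
    using \<open>0 < m\<close> by (simp add: abs_mult divide_right_mono)
  also have "2 * (real (k j) - real (k' j)) / real m
      = (face_point i \<sigma> m k - face_point i \<sigma> m k') $ j"
    using \<open>j \<noteq> i\<close> by (simp add: face_point_def diff_divide_distrib right_diff_distrib)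
  also have "\<bar>\<dots>\<bar> \<le> norm (face_point i \<sigma> m k - face_point i \<sigma> m k')" by (rule component_le_norm_cart)
  finally show ?thesis .
qed

lemma face_point_approx:
  fixes p :: "real ^ 'n::finite"
  assumes "0 < m" "p $ i = \<sigma>" "\<And>j. \<bar>p $ j\<bar> \<le> 1"
  obtains k where "k \<in> face_index i m" "norm (p - face_point i \<sigma> m k) \<le> 2 * CARD('n) / real m"
proof -
  define y where "y j = (p $ j + 1) * real m / 2" for j
  define k where "k j = (if j = i then 0 else nat \<lfloor>y j\<rfloor>)" for j
  have y_bounds: "0 \<le> y j" "y j \<le> real m" for j
    using assms(3)[of j] \<open>0 < m\<close> by (auto simp: y_def)
  have "k j \<le> m" for j
    using y_bounds(2)[of j] by (auto simp: k_def nat_le_iff floor_le_iff)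
  then have "k \<in> face_index i m" by (simp add: face_index_iff k_def)
  have "\<bar>(p - face_point i \<sigma> m k) $ j\<bar> \<le> 2 / real m" for j
  proof (cases "j = i")
    case False
    have "(p - face_point i \<sigma> m k) $ j = 2 * (y j - \<lfloor>y j\<rfloor>) / real m"
      using False y_bounds(1)[of j] \<open>0 < m\<close> by (simp add: face_point_def k_def y_def field_simps)
    moreover have "0 \<le> y j - \<lfloor>y j\<rfloor>" "y j - \<lfloor>y j\<rfloor> \<le> 1" by linarith+
    ultimately show ?thesis using \<open>0 < m\<close> by (simp add: divide_right_mono)
  qed (use assms(2) in \<open>simp add: face_point_def\<close>)
  then have "(\<Sum>j\<in>UNIV. \<bar>(p - face_point i \<sigma> m k) $ j\<bar>) \<le> CARD('n) * (2 / real m)"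
    using sum_bounded_above[of UNIV "\<lambda>j. \<bar>(p - face_point i \<sigma> m k) $ j\<bar>" "2 / real m"] by simp
  then have "norm (p - face_point i \<sigma> m k) \<le> 2 * CARD('n) / real m"
    by (intro order_trans[OF norm_le_l1_cart]) (simp add: mult.commute)
  with \<open>k \<in> face_index i m\<close> show ?thesis by (rule that)
qed

lemma ex_scaleR_on_cube_face:
  fixes v :: "real ^ 'n::finite"
  assumes "v \<noteq> 0"
  obtains i \<sigma> c where "\<bar>\<sigma>\<bar> = 1" "0 < c" "(c *\<^sub>R v) $ i = \<sigma>" "\<And>j. \<bar>(c *\<^sub>R v) $ j\<bar> \<le> 1"
proof -
  have "Max (range (\<lambda>j. \<bar>v $ j\<bar>)) \<in> range (\<lambda>j. \<bar>v $ j\<bar>)" by (rule Max_in) auto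
  then obtain i where "\<bar>v $ i\<bar> = Max (range (\<lambda>j. \<bar>v $ j\<bar>))" by (metis imageE)
  then have max: "\<bar>v $ j\<bar> \<le> \<bar>v $ i\<bar>" for j by simp
  obtain j where "v $ j \<noteq> 0" using \<open>v \<noteq> 0\<close> by (auto simp: vec_eq_iff)
  then have "0 < \<bar>v $ i\<bar>" using max[of j] by linarith
  show ?thesis
  proof (rule that[of "sgn (v $ i)" "1 / \<bar>v $ i\<bar>" i])
    show "\<bar>sgn (v $ i)\<bar> = 1" "0 < 1 / \<bar>v $ i\<bar>" "((1 / \<bar>v $ i\<bar>) *\<^sub>R v) $ i = sgn (v $ i)"
      using \<open>0 < \<bar>v $ i\<bar>\<close> by (auto simp: sgn_real_def)
    show "\<bar>((1 / \<bar>v $ i\<bar>) *\<^sub>R v) $ j\<bar> \<le> 1" for j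
      using max[of j] \<open>0 < \<bar>v $ i\<bar>\<close> by (simp add: abs_mult)
  qed
qed

definition cube_net :: "nat \<Rightarrow> (real ^ 'n::finite) set" where
  "cube_net m = (\<Union>i. \<Union>\<sigma>\<in>{-1, 1}. (\<lambda>k. sgn (face_point i \<sigma> m k)) ` face_index i m)"

lemma finite_cube_net: "finite (cube_net m)"
  by (simp add: cube_net_def finite_face_index)

lemma cube_net_subset_sphere: "cube_net m \<subseteq> sphere 0 1"
proof
  fix x assume "x \<in> cube_net m"
  then obtain i \<sigma> k where "\<sigma> \<in> {-1, 1}" "x = sgn (face_point i \<sigma> m k)"
    by (auto simp: cube_net_def)
  moreover have "face_point i \<sigma> m k \<noteq> 0"
    using one_le_norm_face_point[of \<sigma> i m k] \<open>\<sigma> \<in> {-1, 1}\<close> by auto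
  ultimately show "x \<in> sphere 0 1" by (simp add: norm_sgn)
qed

lemma card_cube_net_le:
  "card (cube_net m :: (real ^ 'n::finite) set) \<le> 2 * CARD('n) * (m + 1) ^ (CARD('n) - 1)"
proof -
  let ?F = "\<lambda>(i::'n) \<sigma>. (\<lambda>k. sgn (face_point i \<sigma> m k)) ` face_index i m"
  have face: "card (?F i \<sigma>) \<le> (m + 1) ^ (CARD('n) - 1)" for i \<sigma>
    using card_image_le[OF finite_face_index] by (metis card_face_index)
  have faces: "card (\<Union>\<sigma>\<in>{-1, 1}. ?F i \<sigma>) \<le> 2 * (m + 1) ^ (CARD('n) - 1)" for i
  proof -
    have "card (\<Union>\<sigma>\<in>{-1, 1}. ?F i \<sigma>) \<le> card (?F i (-1)) + card (?F i 1)"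
      by (simp add: card_Un_le)
    then show ?thesis using face[of i "-1"] face[of i 1] by linarith
  qed
  have "card (cube_net m :: (real ^ 'n) set) \<le> (\<Sum>i\<in>UNIV. card (\<Union>\<sigma>\<in>{-1, 1}. ?F i \<sigma>))"
    unfolding cube_net_def by (rule card_UN_le) simp
  also have "\<dots> \<le> (\<Sum>i::'n\<in>UNIV. 2 * (m + 1) ^ (CARD('n) - 1))"
    by (rule sum_mono) (rule faces)
  finally show ?thesis by simp
qed

lemma cube_net_approx:
  fixes v :: "real ^ 'n::finite"
  assumes "0 < m" "norm v = 1"
  shows "\<exists>w\<in>cube_net m. norm (v - w) \<le> 4 * CARD('n) / real m"
proof -
  obtain i \<sigma> c where "\<bar>\<sigma>\<bar> = 1" "0 < c" and p: "(c *\<^sub>R v) $ i = \<sigma>" "\<And>j. \<bar>(c *\<^sub>R v) $ j\<bar> \<le> 1"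
    using ex_scaleR_on_cube_face \<open>norm v = 1\<close> by (metis norm_zero zero_neq_one)
  define p where "p = c *\<^sub>R v"
  obtain k where "k \<in> face_index i m"
      and pq: "norm (p - face_point i \<sigma> m k) \<le> 2 * CARD('n) / real m"
    using face_point_approx[OF \<open>0 < m\<close> p] unfolding p_def by blast
  define q where "q = face_point i \<sigma> m k"
  have "1 \<le> norm p" using component_le_norm_cart[of p i] p \<open>\<bar>\<sigma>\<bar> = 1\<close> by (simp add: p_def)
  moreover have "1 \<le> norm q" unfolding q_def by (rule one_le_norm_face_point[OF \<open>\<bar>\<sigma>\<bar> = 1\<close>])
  ultimately have "norm (sgn p - sgn q) \<le> 2 * norm (p - q) / norm p"
    by (intro norm_sgn_diff_le) auto
  also have "\<dots> \<le> 2 * norm (p - q)"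
    using \<open>1 \<le> norm p\<close> by (simp add: divide_le_eq mult_le_cancel_left1)
  also have "\<dots> \<le> 4 * CARD('n) / real m" using pq by (simp add: q_def)
  also have "sgn p = v" using \<open>0 < c\<close> \<open>norm v = 1\<close> by (simp add: p_def sgn_div_norm)
  moreover have "\<sigma> \<in> {-1, 1}" using \<open>\<bar>\<sigma>\<bar> = 1\<close> by auto
  ultimately show ?thesis
    using \<open>k \<in> face_index i m\<close> unfolding cube_net_def q_def by blast
qed

lemma OPT_improper_le_cube_net:
  assumes "4 * CARD('n::finite) \<le> m" "2 * CARD('n) * (m + 1) ^ (CARD('n) - 1) \<le> T" "0 \<le> \<delta>"
  shows "OPT_improper TYPE('n) T \<delta> \<le> ereal (\<delta> * (1 + 16 * real CARD('n)^2 / real m^2))"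
proof -
  define \<epsilon> where "\<epsilon> = 4 * real CARD('n) / real m"
  have "0 < m" using assms(1) by (metis mult_pos_pos zero_less_card_finite zero_less_numeral
        order_less_le_trans)
  then have "0 \<le> \<epsilon>" "\<epsilon> \<le> 1" using assms(1) by (auto simp: \<epsilon>_def divide_le_eq_1)
  then have "\<epsilon>\<^sup>2 \<le> 1" by (simp add: power_le_one)
  define c where "c = 1 - \<epsilon>\<^sup>2 / 2"
  have "0 < c" using \<open>\<epsilon>\<^sup>2 \<le> 1\<close> by (simp add: c_def)
  have net: "\<exists>w\<in>cube_net m. c \<le> u \<bullet> w" if u: "norm u = 1" for u :: "real ^ 'n"
  proof -
    obtain w where "w \<in> cube_net m" "norm (u - w) \<le> \<epsilon>"
      using cube_net_approx[OF \<open>0 < m\<close> u] by (auto simp: \<epsilon>_def)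
    moreover have "u \<bullet> w = 1 - (norm (u - w))\<^sup>2 / 2"
      using dot_norm_neg[of u w] u \<open>w \<in> cube_net m\<close> cube_net_subset_sphere by fastforce
    ultimately show ?thesis
      using power_mono[of "norm (u - w)" \<epsilon> 2] by (force simp: c_def)
  qed
  have "card (cube_net m :: (real ^ 'n) set) \<le> T"
    using card_cube_net_le assms(2) order_trans by blast
  then have "OPT_improper TYPE('n) T \<delta> \<le> ereal (\<delta> / c)"
    using OPT_improper_le_of_net[OF finite_cube_net cube_net_subset_sphere _ \<open>0 < c\<close> net] by blast
  also have "\<delta> / c \<le> \<delta> * (1 + \<epsilon>\<^sup>2)"
  proof -
    have "c * (1 + \<epsilon>\<^sup>2) = 1 + \<epsilon>\<^sup>2 * (1 - \<epsilon>\<^sup>2) / 2" by (simp add: c_def field_simps)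
    then have "1 / c \<le> 1 + \<epsilon>\<^sup>2"
      using \<open>\<epsilon>\<^sup>2 \<le> 1\<close> \<open>0 < c\<close> by (simp add: divide_le_eq mult.commute)
    then show ?thesis using mult_left_mono[OF _ \<open>0 \<le> \<delta>\<close>] by fastforce
  qed
  also have "\<epsilon>\<^sup>2 = 16 * real CARD('n)^2 / real m^2"
    by (simp add: \<epsilon>_def power_divide power_mult_distrib)
  finally show ?thesis by simp
qed

definition face_packing :: "'n::finite \<Rightarrow> nat \<Rightarrow> (real ^ 'n) set" where
  "face_packing i m = (\<lambda>k. sgn (face_point i 1 m k)) ` face_index i m"

lemma sgn_face_point_dist_ge:
  fixes i :: "'n::finite"
  assumes "0 < m" "k \<in> face_index i m" "k' \<in> face_index i m" "k \<noteq> k'"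
  shows "1 / (real CARD('n)^2 * real m)
           \<le> norm (sgn (face_point i 1 m k) - sgn (face_point i 1 m k'))"
proof -
  define N where "N = real CARD('n)"
  have "1 \<le> N" by (simp add: N_def)
  have "face_point i 1 m k $ i = 1" "face_point i 1 m k' $ i = 1" by (simp_all add: face_point_def)
  moreover have "norm (face_point i 1 m k) \<le> N" "norm (face_point i 1 m k') \<le> N"
    using norm_face_point_le[of 1] assms(2,3) by (simp_all add: N_def)
  ultimately have "norm (face_point i 1 m k - face_point i 1 m k')
      \<le> (N + N\<^sup>2) * norm (sgn (face_point i 1 m k) - sgn (face_point i 1 m k'))"
    by (rule norm_diff_le_sgn_diff)
  then have "2 / real m \<le> (N + N\<^sup>2) * norm (sgn (face_point i 1 m k) - sgn (face_point i 1 m k'))"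
    using face_point_dist_ge[OF assms, of 1] by linarith
  also have "\<dots> \<le> 2 * N\<^sup>2 * norm (sgn (face_point i 1 m k) - sgn (face_point i 1 m k'))"
    using \<open>1 \<le> N\<close> by (intro mult_right_mono) (auto simp: power2_eq_square)
  finally show ?thesis
    using \<open>1 \<le> N\<close> \<open>0 < m\<close> by (simp add: N_def field_simps)
qed

lemma sgn_face_point_add_ge:
  fixes i :: "'n::finite"
  assumes "0 < m" "k \<in> face_index i m" "k' \<in> face_index i m"
  shows "1 / (real CARD('n)^2 * real m)
           \<le> norm (sgn (face_point i 1 m k) + sgn (face_point i 1 m k'))"
proof -
  define N where "N = real CARD('n)"
  have "1 \<le> N" by (simp add: N_def)
  then have "1 / (N\<^sup>2 * real m) \<le> 2 / N"
    using \<open>0 < m\<close> by (simp add: field_simps power2_eq_square mult_ge1_I)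
  also have "\<dots> \<le> norm (sgn (face_point i 1 m k) + sgn (face_point i 1 m k'))"
    using norm_sgn_add_ge[of _ i _ N] norm_face_point_le[of 1 k i m] norm_face_point_le[of 1 k' i m]
      assms(2,3) by (simp add: N_def face_point_def)
  finally show ?thesis by (simp add: N_def)
qed

lemma face_packing_subset_sphere: "face_packing i m \<subseteq> sphere 0 1"
proof -
  have "face_point i 1 m k \<noteq> 0" for k using one_le_norm_face_point[of 1 i m k] by auto
  then show ?thesis by (auto simp: face_packing_def norm_sgn)
qed

lemma card_face_packing:
  assumes "0 < m"
  shows "card (face_packing (i::'n::finite) m) = (m + 1) ^ (CARD('n) - 1)"
proof -
  have "inj_on (\<lambda>k. sgn (face_point i 1 m k)) (face_index i m)"
  proof (rule inj_onI, rule ccontr)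
    fix k k' assume "k \<in> face_index i m" "k' \<in> face_index i m" "k \<noteq> k'"
      and "sgn (face_point i 1 m k) = sgn (face_point i 1 m k')"
    then show False
      using sgn_face_point_dist_ge[OF assms, of k i k'] assms by (simp add: mult_le_0_iff)
  qed
  then show ?thesis by (simp add: face_packing_def card_image card_face_index)
qed

lemma OPT_improper_ge_face_packing:
  assumes "0 < m" "T < (m + 1) ^ (CARD('n::finite) - 1)" "0 \<le> \<delta>"
  shows "ereal (\<delta> * (1 + 1 / (8 * real CARD('n)^4 * real m^2))) \<le> OPT_improper TYPE('n) T \<delta>"
proof -
  define S :: "(real ^ 'n) set" where "S = face_packing undefined m"
  define s where "s = 1 / (real CARD('n)^2 * real m)"
  have "0 < s" "s \<le> 1" using \<open>0 < m\<close> by (auto simp: s_def mult_ge1_I)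
  define \<gamma> where "\<gamma> = s\<^sup>2 / 8"
  have "\<gamma> < 1" using \<open>s \<le> 1\<close> power_le_one[of s 2] \<open>0 < s\<close> by (auto simp: \<gamma>_def)
  have "ereal (\<delta> / (1 - \<gamma>)) \<le> OPT_improper TYPE('n) T \<delta>"
  proof (rule OPT_improper_ge_of_packing)
    show "finite S" by (simp add: S_def face_packing_def finite_face_index)
    show "S \<subseteq> sphere 0 1" "T < card S"
      using face_packing_subset_sphere card_face_packing[OF \<open>0 < m\<close>, of "undefined :: 'n"] assms(2)
      by (simp_all add: S_def)
    fix u w w' assume "norm u = 1" "w \<in> S" "w' \<in> S" "1 - \<gamma> < \<bar>w \<bullet> u\<bar>" "1 - \<gamma> < \<bar>w' \<bullet> u\<bar>"
    moreover have "norm w = 1" "norm w' = 1"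
      using \<open>w \<in> S\<close> \<open>w' \<in> S\<close> face_packing_subset_sphere by (force simp: S_def)+
    ultimately have "norm (w - w') < s \<or> norm (w + w') < s"
      using norm_diff_or_add_lt_of_aligned[OF _ _ \<open>norm u = 1\<close> \<open>0 < s\<close>] by (simp add: \<gamma>_def)
    then show "w = w'"
      using \<open>w \<in> S\<close> \<open>w' \<in> S\<close> sgn_face_point_dist_ge[OF \<open>0 < m\<close>] sgn_face_point_add_ge[OF \<open>0 < m\<close>]
      unfolding S_def face_packing_def s_def by fastforce
  qed (use \<open>\<gamma> < 1\<close> \<open>0 \<le> \<delta>\<close> in auto)
  moreover have "\<delta> * (1 + \<gamma>) \<le> \<delta> / (1 - \<gamma>)"
  proof -
    have "(1 + \<gamma>) * (1 - \<gamma>) \<le> 1" by (simp add: algebra_simps)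
    then have "1 + \<gamma> \<le> 1 / (1 - \<gamma>)" using \<open>\<gamma> < 1\<close> by (simp add: le_divide_eq)
    then show ?thesis using mult_left_mono[OF _ \<open>0 \<le> \<delta>\<close>] by fastforce
  qed
  moreover have "\<gamma> = 1 / (8 * real CARD('n)^4 * real m^2)"
    by (simp add: \<gamma>_def s_def power_divide power_mult_distrib)
  ultimately show ?thesis by (metis ereal_less_eq(3) order_trans)
qed

section \<open>Rates in terms of the number of queries\<close>

lemma powr_neg_two_div_eq:
  assumes "0 < n" "0 < x"
  shows "x powr (-2 / real n) = 1 / root n x ^ 2"
proof -
  have "x powr (-2 / real n) = (x powr (1 / real n)) powr (-2)" by (simp add: powr_powr)
  also have "\<dots> = 1 / root n x ^ 2"
    using assms by (simp add: root_powr_inverse powr_minus powr_realpow divide_inverse)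
  finally show ?thesis .
qed

lemma OPT_improper_lower_bound:
  assumes "2 \<le> CARD('n::finite)" "1 \<le> T" "0 \<le> \<delta>"
  shows "ereal (\<delta> * (1 + 1 / (8 * real CARD('n)^4) * real T powr (-2 / (real CARD('n) - 1))))
           \<le> OPT_improper TYPE('n) T \<delta>"
proof -
  define n where "n = CARD('n) - 1"
  define r where "r = root n (real T)"
  have "0 < n" "real CARD('n) - 1 = real n" using assms(1) by (auto simp: n_def of_nat_diff)
  have "1 \<le> r" using \<open>1 \<le> T\<close> \<open>0 < n\<close> by (simp add: r_def)
  define m where "m = nat \<lfloor>r\<rfloor>"
  have "1 \<le> m" "real m \<le> r" "r < real m + 1" using \<open>1 \<le> r\<close> by (auto simp: m_def) linarith+
  have "real T = r ^ n" using \<open>0 < n\<close> by (simp add: r_def)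
  also have "\<dots> < (real m + 1) ^ n"
    using \<open>1 \<le> r\<close> \<open>r < real m + 1\<close> \<open>0 < n\<close> by (intro power_strict_mono) auto
  finally have "T < (m + 1) ^ (CARD('n) - 1)"
    unfolding n_def by (metis of_nat_1 of_nat_add of_nat_less_iff of_nat_power)
  moreover have "0 < m" using \<open>1 \<le> m\<close> by simp
  ultimately have bound:
      "ereal (\<delta> * (1 + 1 / (8 * real CARD('n)^4 * real m^2))) \<le> OPT_improper TYPE('n) T \<delta>"
    using OPT_improper_ge_face_packing \<open>0 \<le> \<delta>\<close> by blast
  have "real T powr (-2 / (real CARD('n) - 1)) = 1 / r^2"
    unfolding \<open>real CARD('n) - 1 = real n\<close> r_def using \<open>0 < n\<close> \<open>1 \<le> T\<close>
    by (intro powr_neg_two_div_eq) auto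
  then have "1 / (8 * real CARD('n)^4) * real T powr (-2 / (real CARD('n) - 1))
      = 1 / (8 * real CARD('n)^4 * r^2)"
    by simp
  also have "\<dots> \<le> 1 / (8 * real CARD('n)^4 * real m^2)"
    using \<open>1 \<le> m\<close> \<open>real m \<le> r\<close> by (intro divide_left_mono mult_left_mono power_mono) auto
  finally have "ereal (\<delta> * (1 + 1 / (8 * real CARD('n)^4) * real T powr (-2 / (real CARD('n) - 1))))
      \<le> ereal (\<delta> * (1 + 1 / (8 * real CARD('n)^4 * real m^2)))"
    using \<open>0 \<le> \<delta>\<close> by (simp add: mult_left_mono)
  then show ?thesis using bound by (rule order_trans)
qed

lemma ex_cube_net_size:
  fixes N :: nat and r :: real
  assumes "2 \<le> N" "16 * real N^2 \<le> r"
  obtains m where "4 * N \<le> m" "real (2 * N * (m + 1) ^ (N - 1)) \<le> r ^ (N - 1)"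
    "r / (8 * real N) \<le> real m"
proof -
  define D where "D = real N"
  have "2 \<le> D" using assms(1) by (simp add: D_def)
  have "8 * D \<le> 16 * D^2"
    using mult_right_mono[of 8 "16 * D" D] \<open>2 \<le> D\<close> by (simp add: power2_eq_square)
  then have "8 * D \<le> r" using assms(2) by (simp add: D_def)
  have "4 * D \<le> r / (4 * D)"
    using assms(2) \<open>2 \<le> D\<close> by (simp add: D_def field_simps power2_eq_square)
  define m where "m = nat \<lfloor>r / (4 * D)\<rfloor>"
  have m_le: "real m \<le> r / (4 * D)" and m_gt: "r / (4 * D) - 1 < real m"
    using \<open>4 * D \<le> r / (4 * D)\<close> \<open>2 \<le> D\<close> by (auto simp: m_def)
  show ?thesis
  proof
    show "4 * N \<le> m"
      using \<open>4 * D \<le> r / (4 * D)\<close> by (simp add: m_def D_def le_nat_floor)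
    show "r / (8 * real N) \<le> real m"
      using m_gt \<open>8 * D \<le> r\<close> \<open>2 \<le> D\<close> by (simp add: D_def field_simps)
    have "r / (2 * D) = 2 * (r / (4 * D))" by simp
    then have "real m + 1 \<le> r / (2 * D)" using m_le \<open>4 * D \<le> r / (4 * D)\<close> \<open>2 \<le> D\<close> by linarith
    then have "real (2 * N * (m + 1) ^ (N - 1)) \<le> 2 * D * (r / (2 * D)) ^ (N - 1)"
      using \<open>2 \<le> D\<close> by (simp add: D_def power_mono)
    also have "\<dots> = r ^ (N - 1) * (2 * D / (2 * D) ^ (N - 1))" by (simp add: power_divide)
    also have "\<dots> \<le> r ^ (N - 1)"
    proof (rule mult_left_le)
      have "2 * D \<le> (2 * D) ^ (N - 1)" using assms(1) \<open>2 \<le> D\<close> by (intro self_le_power) auto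
      then show "2 * D / (2 * D) ^ (N - 1) \<le> 1" using \<open>2 \<le> D\<close> by (simp add: divide_le_eq_1)
      show "0 \<le> r ^ (N - 1)" using \<open>8 * D \<le> r\<close> \<open>2 \<le> D\<close> by simp
    qed
    finally show "real (2 * N * (m + 1) ^ (N - 1)) \<le> r ^ (N - 1)" .
  qed
qed

lemma OPT_improper_upper_bound:
  assumes "2 \<le> CARD('n::finite)" "(16 * real CARD('n)^2) ^ (CARD('n) - 1) \<le> real T" "0 \<le> \<delta>"
  shows "OPT_improper TYPE('n) T \<delta>
           \<le> ereal (\<delta> * (1 + 1024 * real CARD('n)^4 * real T powr (-2 / (real CARD('n) - 1))))"
proof -
  define N where "N = real CARD('n)"
  define n where "n = CARD('n) - 1"
  define r where "r = root n (real T)"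
  have "0 < n" "N - 1 = real n" using assms(1) by (auto simp: n_def N_def of_nat_diff)
  have "0 < (16 * N^2) ^ n" by (simp add: N_def)
  then have "0 < real T" using assms(2) unfolding N_def n_def by linarith
  have "16 * N^2 = root n ((16 * N^2) ^ n)"
    using \<open>0 < n\<close> by (rule real_root_power_cancel[symmetric]) simp
  also have "\<dots> \<le> r" using assms(2) \<open>0 < n\<close> by (simp add: r_def N_def n_def)
  finally have "16 * N^2 \<le> r" .
  then obtain m where "4 * CARD('n) \<le> m" and card: "real (2 * CARD('n) * (m + 1) ^ n) \<le> r ^ n"
      and "r / (8 * N) \<le> real m"
    using ex_cube_net_size[OF assms(1)] unfolding N_def n_def by blast
  have "r ^ n = real T" using \<open>0 < n\<close> by (simp add: r_def)
  with card have "real (2 * CARD('n) * (m + 1) ^ n) \<le> real T" by simp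
  then have "2 * CARD('n) * (m + 1) ^ (CARD('n) - 1) \<le> T" unfolding n_def of_nat_le_iff .
  then have bound: "OPT_improper TYPE('n) T \<delta> \<le> ereal (\<delta> * (1 + 16 * N^2 / real m^2))"
    using OPT_improper_le_cube_net[OF \<open>4 * CARD('n) \<le> m\<close> _ \<open>0 \<le> \<delta>\<close>] by (simp add: N_def)
  have "0 < 16 * N^2" by (simp add: N_def)
  then have "0 < r" using \<open>16 * N^2 \<le> r\<close> by linarith
  then have "0 < r / (8 * N)" by (simp add: N_def)
  then have "16 * N^2 / real m^2 \<le> 16 * N^2 / (r / (8 * N))^2"
    using \<open>r / (8 * N) \<le> real m\<close> by (intro frac_le power_mono) auto
  also have "\<dots> = 1024 * N^4 * (1 / r^2)"
    using \<open>0 < r / (8 * N)\<close> by (simp add: N_def field_simps power2_eq_square power4_eq_xxxx)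
  also have "1 / r^2 = real T powr (-2 / (N - 1))"
    unfolding \<open>N - 1 = real n\<close> r_def using \<open>0 < n\<close> \<open>0 < real T\<close>
    by (intro powr_neg_two_div_eq[symmetric])
  finally have "ereal (\<delta> * (1 + 16 * N^2 / real m^2))
      \<le> ereal (\<delta> * (1 + 1024 * N^4 * real T powr (-2 / (N - 1))))"
    using \<open>0 \<le> \<delta>\<close> by (simp add: mult_left_mono)
  with bound show ?thesis unfolding N_def by (rule order_trans)
qed

theorem mainTheorem19:
  assumes "CARD('n::finite) \<ge> 2"
  shows "\<exists>a A :: real. \<exists>T' :: nat. a > 0 \<and> A > 0 \<and> T' \<ge> 1 \<and>
    (\<forall>\<delta>::real. \<forall>T::nat. \<delta> > 0 \<longrightarrow> T \<ge> T' \<longrightarrow>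
       ereal (\<delta> * (1 + a * real T powr (- 2 / (real CARD('n) - 1))))
         \<le> OPT_improper TYPE('n) T \<delta> \<and>
       OPT_improper TYPE('n) T \<delta>
         \<le> ereal (\<delta> * (1 + A * real T powr (- 2 / (real CARD('n) - 1)))))"
proof -
  define N where "N = real CARD('n)"
  define T' :: nat where "T' = (16 * CARD('n)^2) ^ (CARD('n) - 1)"
  show ?thesis
  proof (rule exI[of _ "1 / (8 * N^4)"], rule exI[of _ "1024 * N^4"], rule exI[of _ T'],
      intro conjI allI impI)
    show "0 < 1 / (8 * N^4)" "0 < 1024 * N^4" by (simp_all add: N_def)
    show "1 \<le> T'" by (simp add: T'_def)
    fix \<delta> :: real and T :: nat
    assume "0 < \<delta>" "T' \<le> T"
    then show "ereal (\<delta> * (1 + 1 / (8 * N^4) * real T powr (- 2 / (real CARD('n) - 1))))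
        \<le> OPT_improper TYPE('n) T \<delta>"
      using OPT_improper_lower_bound[OF assms] \<open>1 \<le> T'\<close> by (simp add: N_def)
    have "(16 * N^2) ^ (CARD('n) - 1) = real T'" by (simp add: T'_def N_def)
    also have "\<dots> \<le> real T" using \<open>T' \<le> T\<close> by simp
    finally show "OPT_improper TYPE('n) T \<delta>
        \<le> ereal (\<delta> * (1 + 1024 * N^4 * real T powr (- 2 / (real CARD('n) - 1))))"
      using OPT_improper_upper_bound[OF assms] \<open>0 < \<delta>\<close> by (simp add: N_def)
  qed
qed

end
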